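(* Let $\pi$ be a finite projective plane of order $q$, and let $A=(\mathcal P,\mathcal L,\mathcal I)$ consist of a set $\mathcal P$ of points of $\pi$ and a set $\mathcal L$ of lines of $\pi$, with the incidence $\mathcal I$ inherited from $\pi$, forming a linear space. Assume there is an integer $n$ with $1<n\le q$ such that no point of $\mathcal P$ is incident with more than $n+1$ lines of $\mathcal L$. Then: (a) if $|\mathcal P|=n^2+n+1$, then either $|\mathcal L|=1$ or $A$ is a subplane of $\pi$; (b) if $|\mathcal P|>n^2+n+1$, then $|\mathcal L|=1$.
   Context: A finite projective plane of order $q$ has $q^2+q+1$ points and lines, $q+1$ points on each line and $q+1$ lines through each point; any two distinct points lie on a unique line and any two lines meet in a unique point. $A$ being a linear space means: any two distinct points of $\mathcal P$ lie on exactly one line of $\mathcal L$, and each line of $\mathcal L$ contains at least two points of $\mathcal P$. A subplane of $\pi$ is a projective plane $(\mathcal P_0,\mathcal L_0,\mathcal I_0)$ with $\mathcal P_0$ a set of points of $\pi$, $\mathcal L_0$ a set of lines of $\pi$, and $\mathcal I_0$ contained in the incidence of $\pi$ (i.e. with inherited incidence, any two points of $\mathcal P_0$ lie on a unique line of $\mathcal L_0$, any two lines of $\mathcal L_0$ meet in a unique point of $\mathcal P_0$, each line of $\mathcal L_0$ has at least three points of $\mathcal P_0$, and there are four points of $\mathcal P_0$ no three on a line of $\mathcal L_0$). *)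

theory Defs
  imports Main
begin

definition projective_plane_of_order ::
  "'p set \<Rightarrow> 'l set \<Rightarrow> ('p \<Rightarrow> 'l \<Rightarrow> bool) \<Rightarrow> nat \<Rightarrow> bool" where
  "projective_plane_of_order Pts Lns I q \<longleftrightarrow>
     finite Pts \<and> finite Lns \<and>
     card Pts = q^2 + q + 1 \<and> card Lns = q^2 + q + 1 \<and>
     (\<forall>l\<in>Lns. card {p\<in>Pts. I p l} = q + 1) \<and>
     (\<forall>p\<in>Pts. card {l\<in>Lns. I p l} = q + 1) \<and>
     (\<forall>p\<in>Pts. \<forall>p'\<in>Pts. p \<noteq> p' \<longrightarrow> (\<exists>!l. l \<in> Lns \<and> I p l \<and> I p' l)) \<and>
     (\<forall>l\<in>Lns. \<forall>l'\<in>Lns. l \<noteq> l' \<longrightarrow> (\<exists>!p. p \<in> Pts \<and> I p l \<and> I p l'))"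

definition linear_space ::
  "'p set \<Rightarrow> 'l set \<Rightarrow> ('p \<Rightarrow> 'l \<Rightarrow> bool) \<Rightarrow> bool" where
  "linear_space P0 L0 I \<longleftrightarrow>
     (\<forall>p\<in>P0. \<forall>p'\<in>P0. p \<noteq> p' \<longrightarrow> (\<exists>!l. l \<in> L0 \<and> I p l \<and> I p' l)) \<and>
     (\<forall>l\<in>L0. \<exists>p\<in>P0. \<exists>p'\<in>P0. p \<noteq> p' \<and> I p l \<and> I p' l)"

definition subplane ::
  "'p set \<Rightarrow> 'l set \<Rightarrow> 'p set \<Rightarrow> 'l set \<Rightarrow> ('p \<Rightarrow> 'l \<Rightarrow> bool) \<Rightarrow> bool" where
  "subplane P0 L0 Pts Lns I \<longleftrightarrow>
     P0 \<subseteq> Pts \<and> L0 \<subseteq> Lns \<and>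
     (\<forall>p\<in>P0. \<forall>p'\<in>P0. p \<noteq> p' \<longrightarrow> (\<exists>!l. l \<in> L0 \<and> I p l \<and> I p' l)) \<and>
     (\<forall>l\<in>L0. \<forall>l'\<in>L0. l \<noteq> l' \<longrightarrow> (\<exists>!p. p \<in> P0 \<and> I p l \<and> I p l')) \<and>
     (\<forall>l\<in>L0. \<exists>a\<in>P0. \<exists>b\<in>P0. \<exists>c\<in>P0. a \<noteq> b \<and> a \<noteq> c \<and> b \<noteq> c \<and> I a l \<and> I b l \<and> I c l) \<and>
     (\<exists>a\<in>P0. \<exists>b\<in>P0. \<exists>c\<in>P0. \<exists>d\<in>P0. distinct [a, b, c, d] \<and>
        (\<forall>l\<in>L0. card ({a, b, c, d} \<inter> {p. I p l}) \<le> 2))"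

end

theory Submission
  imports Defs
begin

text \<open>
  Fix a point \<open>p\<close> of the linear space: the lines through \<open>p\<close> partition the remaining points, so \<open>|P| = 1 + \<Sum>\<^sub>l (|l| - 1)\<close> over the at most
  \<open>n + 1\<close> lines through \<open>p\<close>. Unless all points lie on one line, every line \<open>l\<close> misses some
  point \<open>p'\<close>, and joining \<open>p'\<close> to the points of \<open>l\<close> shows \<open>|l| \<le> n + 1\<close>. Hence
  \<open>|P| \<le> 1 + (n + 1) n\<close>, and in case of equality every point lies on exactly \<open>n + 1\<close> lines and
  every line carries exactly \<open>n + 1\<close> points. The joining map is then a bijection from the points
  of a line onto the lines through any point off it, so two lines always meet; a quadrangle
  exists because three lines through a triangle cover at most \<open>3n < n\<^sup>2 + n + 1\<close> points.
\<close>

lemma sum_attains_bound: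
  fixes f :: "'a \<Rightarrow> nat"
  assumes "finite S" and le: "\<And>x. x \<in> S \<Longrightarrow> f x \<le> n" and "card S \<le> m"
    and eq: "sum f S = m * n" and "0 < n"
  shows "card S = m" and "\<forall>x\<in>S. f x = n"
proof -
  have "m * n \<le> card S * n"
    using eq sum_bounded_above[of S f n] le by simp
  then show card: "card S = m"
    using \<open>card S \<le> m\<close> \<open>0 < n\<close> by simp
  have "sum f S = sum (\<lambda>_. n) S"
    using eq card by simp
  then show "\<forall>x\<in>S. f x = n"
    using sum_mono_inv[of f S "\<lambda>_. n"] le \<open>finite S\<close> by blast
qed

lemma card_inter_le_2_if_no_three:
  assumes "distinct [a, b, c, d]"
    and "\<not> (Q a \<and> Q b \<and> Q c)" "\<not> (Q a \<and> Q b \<and> Q d)"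
    and "\<not> (Q a \<and> Q c \<and> Q d)" "\<not> (Q b \<and> Q c \<and> Q d)"
  shows "card ({a, b, c, d} \<inter> {x. Q x}) \<le> 2"
  using assms
  by (cases "Q a"; cases "Q b"; cases "Q c"; cases "Q d")
     (simp_all add: Int_insert_left card_insert_if)

locale finite_linear_space =
  fixes P :: "'p set" and L :: "'l set" and I :: "'p \<Rightarrow> 'l \<Rightarrow> bool"
  assumes finite_points: "finite P" and finite_lines: "finite L"
    and linear: "linear_space P L I"
begin

definition points_on :: "'l \<Rightarrow> 'p set" where
  "points_on l = {p\<in>P. I p l}"

definition lines_through :: "'p \<Rightarrow> 'l set" where
  "lines_through p = {l\<in>L. I p l}"

definition join :: "'p \<Rightarrow> 'p \<Rightarrow> 'l" where
  "join x y = (THE l. l \<in> L \<and> I x l \<and> I y l)"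

lemma finite_points_on: "finite (points_on l)"
  using finite_points by (simp add: points_on_def)

lemma finite_lines_through: "finite (lines_through p)"
  using finite_lines by (simp add: lines_through_def)

lemma line_unique:
  assumes "x \<in> P" "y \<in> P" "x \<noteq> y" "l \<in> L" "l' \<in> L" "I x l" "I y l" "I x l'" "I y l'"
  shows "l = l'"
  using linear assms unfolding linear_space_def by blast

lemma join:
  assumes "x \<in> P" "y \<in> P" "x \<noteq> y"
  shows "join x y \<in> L" "I x (join x y)" "I y (join x y)"
proof -
  have "\<exists>!l. l \<in> L \<and> I x l \<and> I y l"
    using linear assms unfolding linear_space_def by blast
  from theI'[OF this] show "join x y \<in> L" "I x (join x y)" "I y (join x y)"
    unfolding join_def by simp_all
qed

lemma two_points_on_line:
  assumes "l \<in> L"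
  obtains x y where "x \<in> P" "y \<in> P" "x \<noteq> y" "I x l" "I y l"
  using linear assms unfolding linear_space_def by blast

lemma card_points_eq_sum_lines_through:
  assumes p: "p \<in> P"
  shows "card P = 1 + (\<Sum>l\<in>lines_through p. card (points_on l) - 1)"
proof -
  have partition: "P - {p} = (\<Union>l\<in>lines_through p. points_on l - {p})"
  proof
    show "P - {p} \<subseteq> (\<Union>l\<in>lines_through p. points_on l - {p})"
    proof
      fix x assume "x \<in> P - {p}"
      then have "join p x \<in> lines_through p" "x \<in> points_on (join p x) - {p}"
        using join[of p x] p by (auto simp: lines_through_def points_on_def)
      then show "x \<in> (\<Union>l\<in>lines_through p. points_on l - {p})" by blast
    qed
  qed (auto simp: points_on_def)
  have disjoint: "(points_on l - {p}) \<inter> (points_on l' - {p}) = {}"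
    if "l \<in> lines_through p" "l' \<in> lines_through p" "l \<noteq> l'" for l l'
    using that line_unique[of p _ l l'] p by (auto simp: lines_through_def points_on_def)
  have "card (P - {p}) = (\<Sum>l\<in>lines_through p. card (points_on l - {p}))"
    unfolding partition
    by (rule card_UN_disjoint) (use disjoint finite_lines_through finite_points_on in auto)
  also have "\<dots> = (\<Sum>l\<in>lines_through p. card (points_on l) - 1)"
    by (rule sum.cong) (auto simp: points_on_def lines_through_def p)
  finally have "card P - 1 = (\<Sum>l\<in>lines_through p. card (points_on l) - 1)"
    using finite_points p by simp
  moreover have "0 < card P"
    using finite_points p card_gt_0_iff by blast
  ultimately show ?thesis
    by linarith
qed

lemma inj_on_join_points_on:
  assumes "p \<in> P" "l \<in> L" "\<not> I p l"
  shows "inj_on (join p) (points_on l)"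
proof
  fix x y assume xy: "x \<in> points_on l" "y \<in> points_on l" "join p x = join p y"
  show "x = y"
  proof (rule ccontr)
    assume "x \<noteq> y"
    have "p \<noteq> x" "p \<noteq> y"
      using assms xy by (auto simp: points_on_def)
    then have "join p x = l"
      using line_unique[of x y "join p x" l] join[of p x] join[of p y] xy \<open>x \<noteq> y\<close> assms
      by (auto simp: points_on_def)
    then show False
      using join(2)[of p x] \<open>p \<noteq> x\<close> assms xy by (auto simp: points_on_def)
  qed
qed

lemma join_image_points_on:
  assumes "p \<in> P" "\<not> I p l"
  shows "join p ` points_on l \<subseteq> lines_through p"
proof
  fix m assume "m \<in> join p ` points_on l"
  then obtain x where x: "x \<in> P" "I x l" "m = join p x"
    by (auto simp: points_on_def)
  then have "p \<noteq> x"
    using assms by auto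
  then show "m \<in> lines_through p"
    using join[of p x] x assms by (simp add: lines_through_def)
qed

lemma card_points_on_le_card_lines_through:
  assumes "p \<in> P" "l \<in> L" "\<not> I p l"
  shows "card (points_on l) \<le> card (lines_through p)"
  using card_inj_on_le[OF inj_on_join_points_on[OF assms] join_image_points_on finite_lines_through]
    assms by simp

lemma exists_point_off_line:
  assumes "card L \<noteq> 1" "l \<in> L"
  obtains p where "p \<in> P" "\<not> I p l"
proof -
  have "\<not> (\<forall>p\<in>P. I p l)"
  proof
    assume all: "\<forall>p\<in>P. I p l"
    have "L = {l}"
    proof
      show "L \<subseteq> {l}"
      proof
        fix m assume "m \<in> L"
        then obtain x y where "x \<in> P" "y \<in> P" "x \<noteq> y" "I x m" "I y m"
          by (rule two_points_on_line)
        then show "m \<in> {l}"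
          using line_unique[of x y m l] all \<open>m \<in> L\<close> \<open>l \<in> L\<close> by auto
      qed
    qed (use \<open>l \<in> L\<close> in simp)
    then show False
      using \<open>card L \<noteq> 1\<close> by simp
  qed
  then show thesis
    using that by blast
qed

lemma lines_meet:
  assumes points_deg: "\<forall>p\<in>P. card (lines_through p) = k"
    and line_deg: "\<forall>l\<in>L. card (points_on l) = k"
    and "l \<in> L" "l' \<in> L" "l \<noteq> l'"
  shows "\<exists>!x. x \<in> P \<and> I x l \<and> I x l'"
proof -
  obtain p where p: "p \<in> P" "I p l" "\<not> I p l'"
  proof -
    obtain x y where "x \<in> P" "y \<in> P" "x \<noteq> y" "I x l" "I y l"
      using \<open>l \<in> L\<close> by (rule two_points_on_line)
    then show thesis
      using that line_unique[of x y l l'] assms(3-5) by blast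
  qed
  have "card (join p ` points_on l') = card (lines_through p)"
    using card_image[OF inj_on_join_points_on[OF p(1) \<open>l' \<in> L\<close> p(3)]] assms p by simp
  then have "join p ` points_on l' = lines_through p"
    using card_subset_eq[OF finite_lines_through join_image_points_on[OF p(1) p(3)]] by simp
  moreover have "l \<in> lines_through p"
    using \<open>l \<in> L\<close> p by (simp add: lines_through_def)
  ultimately obtain x where x: "x \<in> points_on l'" "l = join p x"
    by auto
  then have "x \<noteq> p"
    using p by (auto simp: points_on_def)
  then have "x \<in> P \<and> I x l \<and> I x l'"
    using join(3)[of p x] x p by (auto simp: points_on_def)
  then show ?thesis
    using line_unique assms(3-5) by blast
qed

lemma exists_quadrangle:
  assumes line_deg: "\<forall>l\<in>L. card (points_on l) = n + 1"
    and "1 \<le> n" and "3 * n < card P"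
  shows "\<exists>a\<in>P. \<exists>b\<in>P. \<exists>c\<in>P. \<exists>d\<in>P. distinct [a, b, c, d] \<and>
           (\<forall>l\<in>L. card ({a, b, c, d} \<inter> {p. I p l}) \<le> 2)"
proof -
  obtain T where "T \<subseteq> P" "card T = 2"
    using obtain_subset_with_card_n[of 2 P] \<open>3 * n < card P\<close> \<open>1 \<le> n\<close> by force
  then obtain x y where xy: "x \<in> P" "y \<in> P" "x \<noteq> y"
    by (auto simp: card_2_iff)
  define l where "l = join x y"
  have l: "l \<in> L"
    using join(1)[OF xy] by (simp add: l_def)
  obtain a b where ab: "a \<in> P" "b \<in> P" "a \<noteq> b" "I a l" "I b l"
    using l by (rule two_points_on_line)
  have "card (points_on l) = n + 1"
    using line_deg l by blast
  then have "card (points_on l) < card P"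
    using \<open>3 * n < card P\<close> \<open>1 \<le> n\<close> by linarith
  then have "\<not> P \<subseteq> points_on l"
    using card_mono[OF finite_points_on, of P l] by (meson not_le)
  then obtain c where c: "c \<in> P" "\<not> I c l"
    by (auto simp: points_on_def)
  have "a \<noteq> c" "b \<noteq> c"
    using ab c by auto
  define lac where "lac = join a c"
  define lbc where "lbc = join b c"
  have lac: "lac \<in> L" "I a lac" "I c lac"
    using join[of a c] ab c \<open>a \<noteq> c\<close> by (simp_all add: lac_def)
  have lbc: "lbc \<in> L" "I b lbc" "I c lbc"
    using join[of b c] ab c \<open>b \<noteq> c\<close> by (simp_all add: lbc_def)
  define U where "U = points_on l \<union> (points_on lac - {a}) \<union> (points_on lbc - {b, c})"
  have "card U \<le> card (points_on l) + card (points_on lac - {a}) + card (points_on lbc - {b, c})"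
    unfolding U_def by (meson card_Un_le add_le_mono le_refl order_trans)
  moreover have "card (points_on lac - {a}) = n"
    using line_deg lac ab finite_points_on by (simp add: points_on_def)
  moreover have "card (points_on lbc - {b, c}) = n - 1"
    using line_deg lbc ab c \<open>b \<noteq> c\<close> finite_points_on
    by (subst card_Diff_subset) (auto simp: points_on_def)
  ultimately have "card U < card P"
    using line_deg l \<open>3 * n < card P\<close> \<open>1 \<le> n\<close> by simp
  moreover have "finite U"
    by (auto simp: U_def finite_points_on)
  ultimately have "\<not> P \<subseteq> U"
    using card_mono[of U P] by (meson not_le)
  then obtain d where d: "d \<in> P" "d \<notin> U"
    by blast
  have d_off: "\<not> I d l" "\<not> I d lac" "\<not> I d lbc"
    using d ab c lac lbc by (auto simp: U_def points_on_def)
  have distinct: "distinct [a, b, c, d]"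
    using ab c d_off lac lbc \<open>a \<noteq> c\<close> \<open>b \<noteq> c\<close> by auto
  have "card ({a, b, c, d} \<inter> {p. I p m}) \<le> 2" if "m \<in> L" for m
  proof (rule card_inter_le_2_if_no_three[OF distinct])
    show "\<not> (I a m \<and> I b m \<and> I c m)" "\<not> (I a m \<and> I b m \<and> I d m)"
      using line_unique[of a b m l] ab c d_off l \<open>m \<in> L\<close> by auto
    show "\<not> (I a m \<and> I c m \<and> I d m)"
      using line_unique[of a c m lac] ab c \<open>a \<noteq> c\<close> lac d_off \<open>m \<in> L\<close> by auto
    show "\<not> (I b m \<and> I c m \<and> I d m)"
      using line_unique[of b c m lbc] ab c \<open>b \<noteq> c\<close> lbc d_off \<open>m \<in> L\<close> by auto
  qed
  then show ?thesis
    using ab c d distinct by blast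
qed

end

locale degree_bounded_linear_space = finite_linear_space +
  fixes n :: nat
  assumes card_lines_through_le: "p \<in> P \<Longrightarrow> card (lines_through p) \<le> n + 1"
    and not_one_line: "card L \<noteq> 1"
begin

lemma card_points_on_le:
  assumes "l \<in> L"
  shows "card (points_on l) \<le> n + 1"
proof -
  obtain p where "p \<in> P" "\<not> I p l"
    using not_one_line assms by (rule exists_point_off_line)
  then show ?thesis
    using card_points_on_le_card_lines_through[of p l] card_lines_through_le assms
    by (meson le_trans)
qed

lemma sum_lines_through_le:
  assumes "p \<in> P"
  shows "(\<Sum>l\<in>lines_through p. card (points_on l) - 1) \<le> (n + 1) * n"
proof -
  have "(\<Sum>l\<in>lines_through p. card (points_on l) - 1) \<le> card (lines_through p) * n"
    using sum_bounded_above[of "lines_through p" "\<lambda>l. card (points_on l) - 1" n]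
      card_points_on_le by (force simp: lines_through_def)
  also have "\<dots> \<le> (n + 1) * n"
    using mult_le_mono1[OF card_lines_through_le[OF assms]] by simp
  finally show ?thesis .
qed

lemma card_points_le: "card P \<le> n\<^sup>2 + n + 1"
proof (cases "P = {}")
  case False
  then obtain p where "p \<in> P" by blast
  then show ?thesis
    using card_points_eq_sum_lines_through sum_lines_through_le
    by (fastforce simp: power2_eq_square algebra_simps)
qed simp

lemma regular_if_card_points_eq:
  assumes "card P = n\<^sup>2 + n + 1" and "0 < n"
  shows "\<forall>p\<in>P. card (lines_through p) = n + 1"
    and "\<forall>l\<in>L. card (points_on l) = n + 1"
proof -
  have through_p: "card (lines_through p) = n + 1 \<and> (\<forall>l\<in>lines_through p. card (points_on l) = n + 1)"
    if "p \<in> P" for p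
  proof -
    have "(\<Sum>l\<in>lines_through p. card (points_on l) - 1) = (n + 1) * n"
      using card_points_eq_sum_lines_through[OF that] assms(1)
      by (simp add: power2_eq_square algebra_simps)
    from sum_attains_bound[OF finite_lines_through _ card_lines_through_le[OF that] this \<open>0 < n\<close>]
    show ?thesis
      using card_points_on_le \<open>0 < n\<close> by (force simp: lines_through_def)
  qed
  then show "\<forall>p\<in>P. card (lines_through p) = n + 1" by blast
  show "\<forall>l\<in>L. card (points_on l) = n + 1"
  proof
    fix l assume "l \<in> L"
    then obtain p where "p \<in> P" "I p l"
      by (metis two_points_on_line)
    then show "card (points_on l) = n + 1"
      using through_p \<open>l \<in> L\<close> by (simp add: lines_through_def)
  qed
qed

lemma subplane_if_card_points_eq:
  assumes "P \<subseteq> Pts" "L \<subseteq> Lns" and "card P = n\<^sup>2 + n + 1" and "1 < n"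
  shows "subplane P L Pts Lns I"
proof -
  note points_deg = regular_if_card_points_eq(1)[OF \<open>card P = _\<close>]
    and line_deg = regular_if_card_points_eq(2)[OF \<open>card P = _\<close>]
  have "2 * n \<le> n * n"
    using \<open>1 < n\<close> by simp
  then have "3 * n < card P"
    using \<open>card P = _\<close> unfolding power2_eq_square by linarith
  have three_points: "\<exists>a\<in>P. \<exists>b\<in>P. \<exists>c\<in>P. a \<noteq> b \<and> a \<noteq> c \<and> b \<noteq> c \<and> I a l \<and> I b l \<and> I c l"
    if "l \<in> L" for l
  proof -
    have "3 \<le> card (points_on l)"
      using line_deg \<open>l \<in> L\<close> \<open>1 < n\<close> by simp
    then obtain T where "T \<subseteq> points_on l" "card T = 3"
      by (metis obtain_subset_with_card_n)
    then show ?thesis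
      by (auto simp: card_3_iff points_on_def)
  qed
  show ?thesis
    unfolding subplane_def
    using assms(1,2) linear three_points
      lines_meet[OF points_deg line_deg] exists_quadrangle[OF line_deg _ \<open>3 * n < card P\<close>] \<open>1 < n\<close>
    unfolding linear_space_def by auto
qed

end

theorem lemma4p3:
  fixes Pts :: "'p set" and Lns :: "'l set" and I :: "'p \<Rightarrow> 'l \<Rightarrow> bool"
    and P0 :: "'p set" and L0 :: "'l set" and q n :: nat
  assumes plane: "projective_plane_of_order Pts Lns I q"
    and subP: "P0 \<subseteq> Pts" and subL: "L0 \<subseteq> Lns"
    and lin: "linear_space P0 L0 I"
    and n_bounds: "1 < n" "n \<le> q"
    and deg: "\<forall>p\<in>P0. card {l\<in>L0. I p l} \<le> n + 1"
  shows "(card P0 = n^2 + n + 1 \<longrightarrow> card L0 = 1 \<or> subplane P0 L0 Pts Lns I)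
       \<and> (card P0 > n^2 + n + 1 \<longrightarrow> card L0 = 1)"
proof (cases "card L0 = 1")
  case False
  have "finite Pts" "finite Lns"
    using plane by (simp_all add: projective_plane_of_order_def)
  then interpret finite_linear_space P0 L0 I
    using subP subL lin by unfold_locales (auto intro: finite_subset)
  interpret degree_bounded_linear_space P0 L0 I n
    using deg False by unfold_locales (simp_all add: lines_through_def)
  show ?thesis
    using card_points_le subplane_if_card_points_eq[OF subP subL _ \<open>1 < n\<close>] by auto
qed simp

end
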